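(* Let $n\ge 1$, $k\ge 0$, and let $0=a_0<a_1<\dots<a_k$ be real numbers. For $j=0,\dots,k$ and $r>0$ let $f_{j,r}:\mathbb{R}^n\to\mathbb{R}$ be radial, essentially non-zero functions satisfying: (1) $f_{j,r}\in L_1(\mathbb{R}^n)\cap L_2(\mathbb{R}^n)$; (2) the Fourier transform of $r^{-n}f_{j,r}$, i.e. $\lambda\mapsto r^{-n}\int_{\mathbb{R}^n}e^{i\langle\lambda,x\rangle}f_{j,r}(x)\,dx$, equals $g_j(r(|\lambda|-a_j))$ for a function $g_j:\mathbb{R}\to\mathbb{R}$ (not depending on $r$); (3) $g_j$ is even and there exist $s_0\ge 0$ and $C>0$ such that $g_j^2(s)\le C s^{-n}$ for all $s\ge s_0$. Suppose a function $f_r:\mathbb{R}^n\to\mathbb{R}$ is given by $f_r(x)=\sum_{j=0}^k C_j f_{j,r}(x)$ for all $x\in\mathbb{R}^n$ and all $r>0$, with constants $C_0,\dots,C_k$ not depending on $r$. Then this representation is unique, i.e. the constants $C_0,\dots,C_k$ are uniquely determined by the family $(f_r)_{r>0}$.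
   Context: A function $f:\mathbb{R}^n\to\mathbb{R}$ is radial if $f(x)=\tilde f(|x|)$ for some function $\tilde f$; it is essentially non-zero if it is non-zero on a set of positive Lebesgue measure. *)

theory Defs
  imports "HOL-Analysis.Analysis"
begin

definition radial :: "('a::real_normed_vector \<Rightarrow> real) \<Rightarrow> bool" where
  "radial f \<longleftrightarrow> (\<exists>h. \<forall>x. f x = h (norm x))"

definition ess_nonzero :: "('a::euclidean_space \<Rightarrow> real) \<Rightarrow> bool" where
  "ess_nonzero f \<longleftrightarrow> emeasure lebesgue {x. f x \<noteq> 0} > 0"

end

theory Submission
  imports Defs "HOL-Real_Asymp.Real_Asymp"
begin

text \<open>
  Subtracting the two representations gives \<open>\<Sum>j E\<^sub>j f\<^sub>j\<^sub>,\<^sub>r = 0\<close> for all \<open>r > 0\<close>, hence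
  \<open>\<Sum>j E\<^sub>j g\<^sub>j(r(|\<lambda>| - a\<^sub>j)) = 0\<close>. If \<open>E\<^sub>m \<noteq> 0\<close>, take \<open>|\<lambda>| = a\<^sub>m + t/r\<close> and let \<open>r \<rightarrow> \<infinity>\<close>:
  every other argument \<open>r(a\<^sub>m - a\<^sub>j) + t\<close> tends to \<open>\<plusminus>\<infinity>\<close>, where the decay of the even
  function \<open>g\<^sub>j\<close> kills the term. So \<open>g\<^sub>m = 0\<close>, i.e. \<open>f\<^sub>m\<^sub>,\<^sub>1\<close> has vanishing Fourier
  transform, and by Fourier uniqueness in \<open>L\<^sub>1\<close> it vanishes almost everywhere,
  contradicting essential non-vanishing.

  Fourier uniqueness is proved directly: \<open>f\<close> integrates to zero against trigonometric
  polynomials, hence (Stone--Weierstrass) against continuous functions of finitely many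
  cosines, hence (dominated convergence) against indicators of sets
  \<open>{x. \<forall>i. c\<^sub>i < cos (\<langle>l\<^sub>i, x\<rangle> + \<beta>\<^sub>i)}\<close>. Within a large cube these sets are boxes, so
  \<open>f\<close> integrates to zero over every box, hence over every measurable set.
\<close>

section \<open>Trigonometric polynomials\<close>

definition trig_poly :: "('a::euclidean_space \<times> complex) list \<Rightarrow> 'a \<Rightarrow> complex" where
  "trig_poly ps x = (\<Sum>(l, c)\<leftarrow>ps. c * cis (l \<bullet> x))"

lemma trig_poly_Nil [simp]: "trig_poly [] x = 0"
  by (simp add: trig_poly_def)

lemma trig_poly_Cons [simp]: "trig_poly ((l, c) # ps) x = c * cis (l \<bullet> x) + trig_poly ps x"
  by (simp add: trig_poly_def)

lemma trig_poly_append [simp]: "trig_poly (ps @ qs) x = trig_poly ps x + trig_poly qs x"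
  by (simp add: trig_poly_def)

lemma trig_poly_shift:
  "trig_poly (map (\<lambda>(l', c'). (l + l', c * c')) ps) x = c * cis (l \<bullet> x) * trig_poly ps x"
  by (induction ps) (auto simp: inner_add_left cis_mult[symmetric] algebra_simps)

lemma trig_poly_mult:
  "trig_poly ps x * trig_poly qs x =
     trig_poly (concat (map (\<lambda>(l, c). map (\<lambda>(l', c'). (l + l', c * c')) qs) ps)) x"
  by (induction ps) (auto simp: trig_poly_shift algebra_simps)

definition is_trig_poly :: "('a::euclidean_space \<Rightarrow> real) \<Rightarrow> bool" where
  "is_trig_poly h \<longleftrightarrow> (\<exists>ps. \<forall>x. complex_of_real (h x) = trig_poly ps x)"

lemma is_trig_poly_const: "is_trig_poly (\<lambda>x. c)"
  unfolding is_trig_poly_def by (rule exI[of _ "[(0, complex_of_real c)]"]) simp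

lemma is_trig_poly_add:
  assumes "is_trig_poly f" "is_trig_poly g"
  shows "is_trig_poly (\<lambda>x. f x + g x)"
proof -
  obtain ps qs where "\<And>x. complex_of_real (f x) = trig_poly ps x" "\<And>x. complex_of_real (g x) = trig_poly qs x"
    using assms unfolding is_trig_poly_def by blast
  then show ?thesis
    unfolding is_trig_poly_def by (intro exI[of _ "ps @ qs"]) simp
qed

lemma is_trig_poly_mult:
  assumes "is_trig_poly f" "is_trig_poly g"
  shows "is_trig_poly (\<lambda>x. f x * g x)"
proof -
  obtain ps qs where "\<And>x. complex_of_real (f x) = trig_poly ps x" "\<And>x. complex_of_real (g x) = trig_poly qs x"
    using assms unfolding is_trig_poly_def by blast
  then show ?thesis
    unfolding is_trig_poly_def by (auto simp: trig_poly_mult)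
qed

lemma is_trig_poly_sum:
  "finite S \<Longrightarrow> (\<And>i. i \<in> S \<Longrightarrow> is_trig_poly (f i)) \<Longrightarrow> is_trig_poly (\<lambda>x. \<Sum>i\<in>S. f i x)"
  by (induction S rule: finite_induct) (auto intro: is_trig_poly_add is_trig_poly_const[of 0])

lemma is_trig_poly_cos: "is_trig_poly (\<lambda>x. cos (l \<bullet> x + \<beta>))"
  unfolding is_trig_poly_def
proof (intro exI[of _ "[(l, cis \<beta> / 2), (-l, cis (-\<beta>) / 2)]"] allI)
  fix x
  have cos_eq: "(cis u + cis (- u)) / 2 = complex_of_real (cos u)" for u
    by (simp add: cis.ctr complex_eq_iff)
  have "trig_poly [(l, cis \<beta> / 2), (-l, cis (-\<beta>) / 2)] x
      = (cis (l \<bullet> x + \<beta>) + cis (-(l \<bullet> x + \<beta>))) / 2"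
    by (simp add: add_divide_distrib cis_mult algebra_simps)
  also have "\<dots> = complex_of_real (cos (l \<bullet> x + \<beta>))"
    by (rule cos_eq)
  finally show "complex_of_real (cos (l \<bullet> x + \<beta>)) = trig_poly [(l, cis \<beta> / 2), (-l, cis (-\<beta>) / 2)] x"
    by simp
qed

lemma is_trig_poly_polynomial_comp:
  fixes G :: "'a::euclidean_space \<Rightarrow> 'b::euclidean_space"
  assumes "real_polynomial_function p" and G: "\<And>b. b \<in> Basis \<Longrightarrow> is_trig_poly (\<lambda>x. G x \<bullet> b)"
  shows "is_trig_poly (\<lambda>x. p (G x))"
  using assms(1)
proof induction
  case (linear f)
  then have "linear f" by (rule bounded_linear.linear)
  then have "f (G x) = (\<Sum>b\<in>Basis. (G x \<bullet> b) * f b)" for x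
    by (subst euclidean_representation[symmetric, of "G x"]) (simp add: linear_sum linear.scaleR)
  moreover have "is_trig_poly (\<lambda>x. \<Sum>b\<in>Basis. (G x \<bullet> b) * f b)"
    by (intro is_trig_poly_sum) (auto intro: is_trig_poly_mult G is_trig_poly_const)
  ultimately show ?case by simp
qed (auto intro: is_trig_poly_const is_trig_poly_add is_trig_poly_mult)

section \<open>Fourier uniqueness for integrable functions\<close>

definition fourier_transform :: "('a::euclidean_space \<Rightarrow> real) \<Rightarrow> 'a \<Rightarrow> complex" where
  "fourier_transform f l = (LINT x|lebesgue. cis (l \<bullet> x) * complex_of_real (f x))"

lemma continuous_imp_measurable_lebesgue:
  "continuous_on UNIV h \<Longrightarrow> h \<in> borel_measurable lebesgue"
  by (rule measurable_completion) (simp add: borel_measurable_continuous_onI)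

lemma integrable_bounded_mult:
  fixes f g :: "'a \<Rightarrow> real"
  assumes "integrable M f" "g \<in> borel_measurable M" "\<And>x. \<bar>g x\<bar> \<le> B"
  shows "integrable M (\<lambda>x. g x * f x)"
proof (rule Bochner_Integration.integrable_bound)
  show "integrable M (\<lambda>x. B * f x)" using assms(1) by simp
  show "(\<lambda>x. g x * f x) \<in> borel_measurable M"
    using assms(2) borel_measurable_integrable[OF assms(1)] by measurable
  have "\<bar>g x\<bar> * \<bar>f x\<bar> \<le> \<bar>B\<bar> * \<bar>f x\<bar>" for x
    using assms(3)[of x] by (intro mult_right_mono) auto
  then show "AE x in M. norm (g x * f x) \<le> norm (B * f x)"
    by (simp add: abs_mult)
qed

lemma integrable_cis_mult:
  fixes f :: "'a::euclidean_space \<Rightarrow> real"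
  assumes "integrable lebesgue f"
  shows "integrable lebesgue (\<lambda>x. cis (l \<bullet> x) * complex_of_real (f x))"
proof (rule Bochner_Integration.integrable_bound)
  show "integrable lebesgue (\<lambda>x. complex_of_real (f x))"
    using assms by (simp add: complex_of_real_integrable_eq)
  have "(\<lambda>x. cis (l \<bullet> x)) \<in> borel_measurable lebesgue"
    by (intro continuous_imp_measurable_lebesgue continuous_intros)
  then show "(\<lambda>x. cis (l \<bullet> x) * complex_of_real (f x)) \<in> borel_measurable lebesgue"
    using borel_measurable_integrable[OF assms] by measurable
  show "AE x in lebesgue. norm (cis (l \<bullet> x) * complex_of_real (f x)) \<le> norm (complex_of_real (f x))"
    by (simp add: norm_mult)
qed

lemma fourier_transform_sum:
  assumes "finite S" "\<And>j. j \<in> S \<Longrightarrow> integrable lebesgue (f j)"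
  shows "fourier_transform (\<lambda>x. \<Sum>j\<in>S. c j * f j x) l = (\<Sum>j\<in>S. complex_of_real (c j) * fourier_transform (f j) l)"
proof -
  have "(\<lambda>x. cis (l \<bullet> x) * complex_of_real (\<Sum>j\<in>S. c j * f j x))
      = (\<lambda>x. \<Sum>j\<in>S. complex_of_real (c j) * (cis (l \<bullet> x) * complex_of_real (f j x)))"
    by (simp add: sum_distrib_left algebra_simps)
  then show ?thesis
    unfolding fourier_transform_def
    using assms by (simp add: integrable_cis_mult Bochner_Integration.integral_sum)
qed

lemma sum_fourier_values_eq_0:
  assumes "finite S" "\<And>j. j \<in> S \<Longrightarrow> integrable lebesgue (f j)"
    and FT: "\<And>j. j \<in> S \<Longrightarrow> fourier_transform (f j) l = complex_of_real (h j)"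
    and comb: "\<And>x. (\<Sum>j\<in>S. c j * f j x) = 0"
  shows "(\<Sum>j\<in>S. c j * h j) = 0"
proof -
  have "complex_of_real (\<Sum>j\<in>S. c j * h j) = fourier_transform (\<lambda>x. \<Sum>j\<in>S. c j * f j x) l"
    using fourier_transform_sum[OF assms(1,2), where c=c and l=l] FT by simp
  also have "\<dots> = fourier_transform (\<lambda>x. 0) l"
    by (simp only: comb)
  also have "\<dots> = 0"
    by (simp add: fourier_transform_def)
  finally show ?thesis
    by (simp only: of_real_eq_0_iff)
qed

lemma integral_trig_poly_mult_eq_0:
  fixes f :: "'a::euclidean_space \<Rightarrow> real"
  assumes int: "integrable lebesgue f" and FT: "fourier_transform f = (\<lambda>_. 0)"
    and h: "is_trig_poly h"
  shows "(LINT x|lebesgue. h x * f x) = 0"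
proof -
  obtain ps where ps: "\<And>x. complex_of_real (h x) = trig_poly ps x"
    using h unfolding is_trig_poly_def by blast
  have "integrable lebesgue (\<lambda>x. trig_poly qs x * complex_of_real (f x)) \<and>
        (LINT x|lebesgue. trig_poly qs x * complex_of_real (f x)) = 0" for qs
  proof (induction qs)
    case (Cons q qs)
    obtain l c where q: "q = (l, c)" by fastforce
    have "(\<lambda>x. trig_poly (q # qs) x * complex_of_real (f x)) =
        (\<lambda>x. c * (cis (l \<bullet> x) * complex_of_real (f x)) + trig_poly qs x * complex_of_real (f x))"
      by (simp add: q algebra_simps)
    moreover have "(LINT x|lebesgue. cis (l \<bullet> x) * complex_of_real (f x)) = 0"
      using fun_cong[OF FT, of l] by (simp add: fourier_transform_def)
    ultimately show ?case
      using Cons integrable_cis_mult[OF int, of l] by simp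
  qed simp
  then have "(CLINT x|lebesgue. complex_of_real (h x * f x)) = 0"
    by (simp add: ps)
  then show ?thesis
    using integral_complex_of_real[of lebesgue "\<lambda>x. h x * f x"] by simp
qed

lemma integral_mult_eq_0_of_uniform_approx:
  fixes f \<psi> :: "'a::euclidean_space \<Rightarrow> real"
  assumes int: "integrable M f"
    and \<psi>: "\<psi> \<in> borel_measurable M" "\<And>x. \<bar>\<psi> x\<bar> \<le> B"
    and approx: "\<And>e. e > 0 \<Longrightarrow> \<exists>h. h \<in> borel_measurable M \<and> (\<forall>x. \<bar>\<psi> x - h x\<bar> \<le> e) \<and>
                                   (LINT x|M. h x * f x) = 0"
  shows "(LINT x|M. \<psi> x * f x) = 0"
proof -
  define A where "A = (LINT x|M. \<bar>f x\<bar>)"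
  have "A \<ge> 0" unfolding A_def by (rule integral_nonneg_AE) auto
  have "\<bar>LINT x|M. \<psi> x * f x\<bar> \<le> 0 + e" if "e > 0" for e
  proof -
    obtain h where h: "h \<in> borel_measurable M" "\<And>x. \<bar>\<psi> x - h x\<bar> \<le> e / (A + 1)"
      and h0: "(LINT x|M. h x * f x) = 0"
      using approx[of "e / (A + 1)"] \<open>e > 0\<close> \<open>A \<ge> 0\<close> by auto
    have int_diff: "integrable M (\<lambda>x. (\<psi> x - h x) * f x)"
      using int \<psi>(1) h by (intro integrable_bounded_mult) auto
    have int_h: "integrable M (\<lambda>x. h x * f x)"
    proof (rule integrable_bounded_mult[OF int h(1)])
      show "\<bar>h x\<bar> \<le> B + e / (A + 1)" for x
        using \<psi>(2)[of x] h(2)[of x] by linarith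
    qed
    have "integrable M (\<lambda>x. \<psi> x * f x)"
      using int \<psi> by (rule integrable_bounded_mult)
    then have "(LINT x|M. \<psi> x * f x) = (LINT x|M. (\<psi> x - h x) * f x)"
      using int_h h0 by (simp add: left_diff_distrib Bochner_Integration.integral_diff)
    also have "\<bar>\<dots>\<bar> \<le> (LINT x|M. e / (A + 1) * \<bar>f x\<bar>)"
    proof (rule integral_abs_bound_integral)
      show "\<bar>(\<psi> x - h x) * f x\<bar> \<le> e / (A + 1) * \<bar>f x\<bar>" for x
        unfolding abs_mult using h(2)[of x] by (rule mult_right_mono) simp
    qed (use int_diff int in auto)
    also have "\<dots> = e * (A / (A + 1))"
      by (simp add: A_def)
    also have "\<dots> \<le> e"
      using \<open>e > 0\<close> \<open>A \<ge> 0\<close> by (simp add: field_simps)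
    finally show ?thesis by simp
  qed
  then have "\<bar>LINT x|M. \<psi> x * f x\<bar> \<le> 0"
    by (rule field_le_epsilon)
  then show ?thesis by simp
qed

lemma integral_continuous_comp_mult_eq_0:
  fixes f :: "'a::euclidean_space \<Rightarrow> real" and G :: "'a \<Rightarrow> 'b::euclidean_space"
  assumes int: "integrable lebesgue f" and FT: "fourier_transform f = (\<lambda>_. 0)"
    and G: "\<And>b. b \<in> Basis \<Longrightarrow> is_trig_poly (\<lambda>x. G x \<bullet> b)" "continuous_on UNIV G"
    and K: "compact K" "range G \<subseteq> K"
    and \<Psi>: "continuous_on K \<Psi>"
  shows "(LINT x|lebesgue. \<Psi> (G x) * f x) = 0"
proof -
  obtain B where B: "\<And>y. y \<in> K \<Longrightarrow> \<bar>\<Psi> y\<bar> \<le> B"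
    using compact_imp_bounded[OF compact_continuous_image[OF \<Psi> K(1)]] unfolding bounded_iff by auto
  show ?thesis
  proof (rule integral_mult_eq_0_of_uniform_approx[OF int])
    show "\<bar>\<Psi> (G x)\<bar> \<le> B" for x
      using B K(2) by auto
    have "continuous_on UNIV (\<lambda>x. \<Psi> (G x))"
      using continuous_on_compose2[OF \<Psi> G(2)] K(2) by auto
    then show "(\<lambda>x. \<Psi> (G x)) \<in> borel_measurable lebesgue"
      by (rule continuous_imp_measurable_lebesgue)
    fix e :: real assume "e > 0"
    obtain p where p: "polynomial_function p" "\<forall>y\<in>K. norm (\<Psi> y - p y) < e"
      using Stone_Weierstrass_polynomial_function[OF K(1) \<Psi> \<open>e > 0\<close>] by blast
    have "(\<lambda>x. p (G x)) \<in> borel_measurable lebesgue"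
      using continuous_on_compose[OF G(2) continuous_on_polymonial_function[OF p(1)]]
      by (simp add: o_def continuous_imp_measurable_lebesgue)
    moreover have "\<bar>\<Psi> (G x) - p (G x)\<bar> \<le> e" for x
    proof -
      have "G x \<in> K" using K(2) by auto
      then show ?thesis using p(2) by (simp add: less_imp_le)
    qed
    moreover have "real_polynomial_function p"
      using p(1) by (simp add: polynomial_function_iff_Basis_inner)
    then have "is_trig_poly (\<lambda>x. p (G x))"
      using G(1) by (rule is_trig_poly_polynomial_comp)
    then have "(LINT x|lebesgue. p (G x) * f x) = 0"
      by (rule integral_trig_poly_mult_eq_0[OF int FT])
    ultimately show "\<exists>h. h \<in> borel_measurable lebesgue \<and> (\<forall>x. \<bar>\<Psi> (G x) - h x\<bar> \<le> e) \<and>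
                         (LINT x|lebesgue. h x * f x) = 0"
      by blast
  qed
qed

lemma tendsto_clamped_ramp:
  "(\<lambda>k::nat. min 1 (max 0 (real k * (t - c)))) \<longlonglongrightarrow> (if c < t then 1 else 0 :: real)"
proof (cases "c < t")
  case True
  obtain N :: nat where N: "1 / (t - c) < real N"
    using reals_Archimedean2 by blast
  have "eventually (\<lambda>k. min 1 (max 0 (real k * (t - c))) = 1) sequentially"
  proof (rule eventually_sequentiallyI[of N])
    fix k assume "N \<le> k"
    then have "1 / (t - c) < real k"
      using N by (meson le_less_trans not_le of_nat_le_iff order_less_imp_le order_trans)
    then show "min 1 (max 0 (real k * (t - c))) = 1"
      using True by (simp add: field_simps)
  qed
  then show ?thesis
    using True by (simp add: tendsto_eventually)
next
  case False
  then show ?thesis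
    by (simp add: mult_nonneg_nonpos)
qed

text \<open>
  The sets \<open>{x. \<forall>b. c b < cos (lv b \<bullet> x + \<beta> b)}\<close> are approximated from inside by the
  continuous functions \<open>\<Psi>\<^sub>k\<close> of the point \<open>G x = (cos (lv b \<bullet> x + \<beta> b))\<^sub>b\<close>.
\<close>
lemma integral_cos_threshold_mult_eq_0:
  fixes f :: "'a::euclidean_space \<Rightarrow> real" and c \<beta> :: "'a \<Rightarrow> real" and lv :: "'a \<Rightarrow> 'a"
  assumes int: "integrable lebesgue f" and FT: "fourier_transform f = (\<lambda>_. 0)"
  shows "(LINT x|lebesgue. (\<Prod>b\<in>Basis. if c b < cos (lv b \<bullet> x + \<beta> b) then 1 else 0) * f x) = 0"
proof -
  define G where "G x = (\<Sum>b\<in>Basis. cos (lv b \<bullet> x + \<beta> b) *\<^sub>R b)" for x :: 'a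
  have G_inner: "G x \<bullet> b = cos (lv b \<bullet> x + \<beta> b)" if "b \<in> Basis" for x b
    unfolding G_def using that by (simp add: inner_sum_left_Basis)
  define \<Psi> where "\<Psi> k y = (\<Prod>b\<in>Basis. min 1 (max 0 (real k * (y \<bullet> b - c b))))" for k :: nat and y :: 'a
  have \<Psi>_G: "\<Psi> k (G x) = (\<Prod>b\<in>Basis. min 1 (max 0 (real k * (cos (lv b \<bullet> x + \<beta> b) - c b))))" for k x
    unfolding \<Psi>_def by (intro prod.cong) (auto simp: G_inner)
  have "(LINT x|lebesgue. \<Psi> k (G x) * f x) = 0" for k
  proof (rule integral_continuous_comp_mult_eq_0[OF int FT, of G])
    show "is_trig_poly (\<lambda>x. G x \<bullet> b)" if "b \<in> Basis" for b
      using is_trig_poly_cos[of "lv b" "\<beta> b"] G_inner[OF that] by simp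
    show "continuous_on UNIV G"
      unfolding G_def by (intro continuous_intros)
    show "compact (cbox (-One) (One::'a))" "range G \<subseteq> cbox (-One) One"
      by (auto simp: mem_box G_inner inner_minus_left)
    show "continuous_on (cbox (-One) One) (\<Psi> k)"
      unfolding \<Psi>_def by (intro continuous_intros)
  qed
  moreover have "(\<lambda>k. LINT x|lebesgue. \<Psi> k (G x) * f x) \<longlonglongrightarrow>
      (LINT x|lebesgue. (\<Prod>b\<in>Basis. if c b < cos (lv b \<bullet> x + \<beta> b) then 1 else 0) * f x)"
  proof (rule integral_dominated_convergence[where w="\<lambda>x. \<bar>f x\<bar>"])
    have [measurable]: "f \<in> borel_measurable lebesgue"
      using int by (rule borel_measurable_integrable)
    have [measurable]: "(\<lambda>x. cos (lv b \<bullet> x + \<beta> b)) \<in> borel_measurable lebesgue" for b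
      by (intro continuous_imp_measurable_lebesgue continuous_intros)
    show "(\<lambda>x. (\<Prod>b\<in>Basis. if c b < cos (lv b \<bullet> x + \<beta> b) then 1 else 0) * f x) \<in> borel_measurable lebesgue"
      by measurable
    show "(\<lambda>x. \<Psi> k (G x) * f x) \<in> borel_measurable lebesgue" for k
      unfolding \<Psi>_G by measurable
    show "integrable lebesgue (\<lambda>x. \<bar>f x\<bar>)"
      using int by simp
    show "AE x in lebesgue. (\<lambda>k. \<Psi> k (G x) * f x) \<longlonglongrightarrow>
        (\<Prod>b\<in>Basis. if c b < cos (lv b \<bullet> x + \<beta> b) then 1 else 0) * f x"
      unfolding \<Psi>_G by (intro AE_I2 tendsto_mult tendsto_const tendsto_prod tendsto_clamped_ramp)
    show "AE x in lebesgue. norm (\<Psi> k (G x) * f x) \<le> \<bar>f x\<bar>" for k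
    proof (rule AE_I2)
      fix x
      have "0 \<le> \<Psi> k (G x)" "\<Psi> k (G x) \<le> 1"
        unfolding \<Psi>_def by (auto intro!: prod_nonneg prod_le_1)
      then show "norm (\<Psi> k (G x) * f x) \<le> \<bar>f x\<bar>"
        by (simp add: abs_mult mult_left_le_one_le)
    qed
  qed
  ultimately show ?thesis
    by (simp add: LIMSEQ_const_iff)
qed

lemma cos_less_cos_iff_abs_less:
  fixes h L t :: real
  assumes h: "0 < h" "h < L" and t: "\<bar>t\<bar> < 2 * L - h"
  shows "cos (pi / L * h) < cos (pi / L * t) \<longleftrightarrow> \<bar>t\<bar> < h"
proof -
  have L: "L > 0" using h by simp
  have ct: "cos (pi * t / L) = cos (pi * \<bar>t\<bar> / L)"
    using cos_abs_real[of "pi * t / L"] L by (simp add: abs_mult abs_divide)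
  have hpi: "pi * h / L \<le> pi" using h L by (simp add: field_simps)
  show ?thesis
  proof (cases "\<bar>t\<bar> < h")
    case True
    have "cos (pi * h / L) < cos (pi * \<bar>t\<bar> / L)"
      by (rule cos_monotone_0_pi) (use True L hpi in \<open>auto simp: field_simps\<close>)
    then show ?thesis using True ct by simp
  next
    case False
    have "cos (pi * \<bar>t\<bar> / L) \<le> cos (pi * h / L)"
    proof (cases "\<bar>t\<bar> \<le> L")
      case True
      show ?thesis
        by (rule cos_monotone_0_pi_le) (use True False L h in \<open>auto simp: field_simps\<close>)
    next
      case beyond: False
      have "cos (pi * \<bar>t\<bar> / L) = cos (2 * pi - pi * \<bar>t\<bar> / L)" by (simp add: cos_2pi_minus)
      also have "2 * pi - pi * \<bar>t\<bar> / L = pi * (2 * L - \<bar>t\<bar>) / L" using L by (simp add: field_simps)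
      also have "cos (pi * (2 * L - \<bar>t\<bar>) / L) \<le> cos (pi * h / L)"
      proof (rule cos_monotone_0_pi_le)
        show "0 \<le> pi * h / L" using h L by simp
        show "pi * h / L \<le> pi * (2 * L - \<bar>t\<bar>) / L"
          by (intro divide_right_mono mult_left_mono) (use t L in auto)
        have "pi * (2 * L - \<bar>t\<bar>) / L \<le> pi * L / L"
          by (intro divide_right_mono mult_left_mono) (use beyond L in auto)
        then show "pi * (2 * L - \<bar>t\<bar>) / L \<le> pi" using L by simp
      qed
      finally show ?thesis .
    qed
    then show ?thesis using False ct by simp
  qed
qed

text \<open>
  On the cube of half-width \<open>L\<close> the \<open>i\<close>-th factor is the indicator of
  \<open>\<bar>x\<^sub>i - (a\<^sub>i + b\<^sub>i)/2\<bar> < (b\<^sub>i - a\<^sub>i)/2\<close>.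
\<close>
definition cos_window :: "'a::euclidean_space \<Rightarrow> 'a \<Rightarrow> real \<Rightarrow> 'a \<Rightarrow> real" where
  "cos_window a b L x = (\<Prod>i\<in>Basis.
     if cos (pi / L * ((b \<bullet> i - a \<bullet> i) / 2)) < cos (pi / L * (x \<bullet> i - (a \<bullet> i + b \<bullet> i) / 2))
     then 1 else 0)"

lemma cos_window_nonneg: "0 \<le> cos_window a b L x"
  and cos_window_le_1: "cos_window a b L x \<le> 1"
  by (auto simp: cos_window_def intro!: prod_nonneg prod_le_1)

lemma cos_window_measurable [measurable]: "cos_window a b L \<in> borel_measurable lebesgue"
proof -
  have [measurable]: "(\<lambda>x. cos (pi / L * (x \<bullet> i - c))) \<in> borel_measurable lebesgue" for i c
    by (intro continuous_imp_measurable_lebesgue continuous_intros)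
  show ?thesis
    unfolding cos_window_def[abs_def] by measurable
qed

lemma integral_cos_window_mult_eq_0:
  fixes f :: "'a::euclidean_space \<Rightarrow> real"
  assumes "integrable lebesgue f" and "fourier_transform f = (\<lambda>_. 0)"
  shows "(LINT x|lebesgue. cos_window a b L x * f x) = 0"
proof -
  have arg: "pi / L * (x \<bullet> i - m) = ((pi / L) *\<^sub>R i) \<bullet> x + - (pi / L * m)" for x i m
    by (simp add: inner_commute right_diff_distrib)
  show ?thesis
    unfolding cos_window_def arg by (rule integral_cos_threshold_mult_eq_0[OF assms])
qed

lemma prod_if_one_zero:
  "finite S \<Longrightarrow> (\<Prod>i\<in>S. if P i then 1 else 0 :: real) = (if \<forall>i\<in>S. P i then 1 else 0)"
  by (auto simp: prod_zero_iff intro!: prod.neutral)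

lemma cos_window_eq_indicator_box:
  fixes a b x :: "'a::euclidean_space"
  assumes ab: "\<And>i. i \<in> Basis \<Longrightarrow> a \<bullet> i < b \<bullet> i"
    and in_cube: "\<And>i. i \<in> Basis \<Longrightarrow> \<bar>a \<bullet> i\<bar> < L \<and> \<bar>b \<bullet> i\<bar> < L \<and> \<bar>x \<bullet> i\<bar> < L"
  shows "cos_window a b L x = indicator (box a b) x"
proof -
  have "cos (pi / L * ((b \<bullet> i - a \<bullet> i) / 2)) < cos (pi / L * (x \<bullet> i - (a \<bullet> i + b \<bullet> i) / 2))
      \<longleftrightarrow> a \<bullet> i < x \<bullet> i \<and> x \<bullet> i < b \<bullet> i" if i: "i \<in> Basis" for i
  proof -
    have "cos (pi / L * ((b \<bullet> i - a \<bullet> i) / 2)) < cos (pi / L * (x \<bullet> i - (a \<bullet> i + b \<bullet> i) / 2))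
        \<longleftrightarrow> \<bar>x \<bullet> i - (a \<bullet> i + b \<bullet> i) / 2\<bar> < (b \<bullet> i - a \<bullet> i) / 2"
      using ab[OF i] in_cube[OF i] by (intro cos_less_cos_iff_abs_less) (auto simp: abs_less_iff field_simps)
    also have "\<dots> \<longleftrightarrow> a \<bullet> i < x \<bullet> i \<and> x \<bullet> i < b \<bullet> i"
      by (auto simp: abs_less_iff field_simps)
    finally show ?thesis .
  qed
  then show ?thesis
    by (simp add: cos_window_def prod_if_one_zero mem_box indicator_def)
qed

lemma tendsto_integral_outside_cube:
  fixes f :: "'a::euclidean_space \<Rightarrow> real"
  assumes int: "integrable lebesgue f"
  shows "(\<lambda>n::nat. LINT x|lebesgue. indicator (- box (- (real n *\<^sub>R One)) (real n *\<^sub>R One)) x * \<bar>f x\<bar>)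
           \<longlonglongrightarrow> 0"
proof -
  have [measurable]: "f \<in> borel_measurable lebesgue"
    using int by (rule borel_measurable_integrable)
  have "(\<lambda>n::nat. LINT x|lebesgue. indicator (- box (- (real n *\<^sub>R One)) (real n *\<^sub>R One)) x * \<bar>f x\<bar>)
          \<longlonglongrightarrow> (LINT (x::'a)|lebesgue. 0)"
  proof (rule integral_dominated_convergence[where w="\<lambda>x. \<bar>f x\<bar>"])
    show "integrable lebesgue (\<lambda>x. \<bar>f x\<bar>)"
      using int by simp
    show "(\<lambda>x. indicator (- box (- (real n *\<^sub>R One)) (real n *\<^sub>R One)) x * \<bar>f x\<bar>)
        \<in> borel_measurable lebesgue" for n
    proof -
      have "- box (- (real n *\<^sub>R One)) (real n *\<^sub>R One :: 'a) \<in> sets lebesgue"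
        by simp
      then show ?thesis by measurable
    qed
    show "AE x in lebesgue. norm (indicator (- box (- (real n *\<^sub>R One)) (real n *\<^sub>R One)) x * \<bar>f x\<bar>) \<le> \<bar>f x\<bar>" for n
      by (auto simp: indicator_def)
    show "AE x in lebesgue. (\<lambda>n. indicator (- box (- (real n *\<^sub>R One)) (real n *\<^sub>R One)) x * \<bar>f x\<bar>) \<longlonglongrightarrow> 0"
    proof (rule AE_I2)
      fix x :: 'a
      obtain N :: nat where N: "norm x < real N"
        using reals_Archimedean2 by blast
      have "x \<in> box (- (real n *\<^sub>R One)) (real n *\<^sub>R One)" if "N \<le> n" for n
        using N that Basis_le_norm[of _ x] by (force simp: mem_box abs_less_iff)
      then have "eventually (\<lambda>n. indicator (- box (- (real n *\<^sub>R One)) (real n *\<^sub>R One)) x * \<bar>f x\<bar> = 0) sequentially"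
        by (intro eventually_sequentiallyI[of N]) simp
      then show "(\<lambda>n. indicator (- box (- (real n *\<^sub>R One)) (real n *\<^sub>R One)) x * \<bar>f x\<bar>) \<longlonglongrightarrow> 0"
        by (simp add: tendsto_eventually)
    qed
  qed simp_all
  then show ?thesis by simp
qed

lemma set_integral_box_eq_0:
  fixes f :: "'a::euclidean_space \<Rightarrow> real"
  assumes int: "integrable lebesgue f" and FT: "fourier_transform f = (\<lambda>_. 0)"
  shows "(LINT x:box a b|lebesgue. f x) = 0"
proof (cases "\<forall>i\<in>Basis. a \<bullet> i < b \<bullet> i")
  case False
  then have "box a b = {}" by (auto simp: box_eq_empty not_less)
  then show ?thesis by (simp add: set_lebesgue_integral_def)
next
  case True
  define I where "I = (LINT x|lebesgue. indicator (box a b) x * f x)"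
  define outside where "outside n = - box (- (real n *\<^sub>R One)) (real n *\<^sub>R One :: 'a)" for n :: nat
  have [measurable]: "f \<in> borel_measurable lebesgue"
    using int by (rule borel_measurable_integrable)
  have "\<bar>I\<bar> \<le> (LINT x|lebesgue. indicator (outside n) x * \<bar>f x\<bar>)"
    if n: "norm a + norm b < real n" for n
  proof -
    have window_close: "\<bar>cos_window a b (real n) x - indicator (box a b) x\<bar> \<le> indicator (outside n) x" for x
    proof (cases "x \<in> outside n")
      case False
      then have "\<bar>x \<bullet> i\<bar> < real n" if "i \<in> Basis" for i
        using that by (auto simp: outside_def mem_box abs_less_iff)
      moreover have "\<bar>a \<bullet> i\<bar> < real n \<and> \<bar>b \<bullet> i\<bar> < real n" if "i \<in> Basis" for i
        using n Basis_le_norm[OF that, of a] Basis_le_norm[OF that, of b] by linarith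
      ultimately show ?thesis
        using True by (simp add: cos_window_eq_indicator_box)
    qed (use cos_window_nonneg[of a b "real n" x] cos_window_le_1[of a b "real n" x] in
          \<open>auto simp: indicator_def\<close>)
    have int_box: "integrable lebesgue (\<lambda>x. indicator (box a b) x * f x)"
      using integrable_mult_indicator[OF _ int, of "box a b"] by simp
    have int_window: "integrable lebesgue (\<lambda>x. cos_window a b (real n) x * f x)"
    proof (rule integrable_bounded_mult[OF int cos_window_measurable])
      show "\<bar>cos_window a b (real n) x\<bar> \<le> 1" for x
        using cos_window_nonneg[of a b "real n" x] cos_window_le_1[of a b "real n" x] by simp
    qed
    have "(LINT x|lebesgue. (cos_window a b (real n) x - indicator (box a b) x) * f x) = - I"
      using integral_cos_window_mult_eq_0[OF int FT, of a b "real n"] int_box int_window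
      by (simp add: I_def left_diff_distrib Bochner_Integration.integral_diff)
    moreover have "\<bar>LINT x|lebesgue. (cos_window a b (real n) x - indicator (box a b) x) * f x\<bar>
        \<le> (LINT x|lebesgue. indicator (outside n) x * \<bar>f x\<bar>)"
    proof (rule integral_abs_bound_integral)
      show "integrable lebesgue (\<lambda>x. (cos_window a b (real n) x - indicator (box a b) x) * f x)"
        using int_window int_box by (simp add: left_diff_distrib)
      show "integrable lebesgue (\<lambda>x. indicator (outside n) x * \<bar>f x\<bar>)"
        using integrable_mult_indicator[OF _ integrable_abs[OF int], of "outside n"]
        by (simp add: outside_def)
      show "\<bar>(cos_window a b (real n) x - indicator (box a b) x) * f x\<bar> \<le> indicator (outside n) x * \<bar>f x\<bar>" for x
        unfolding abs_mult using window_close[of x] by (rule mult_right_mono) simp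
    qed
    ultimately show ?thesis by simp
  qed
  moreover obtain N :: nat where "norm a + norm b < real N"
    using reals_Archimedean2 by blast
  ultimately have "eventually (\<lambda>n. \<bar>I\<bar> \<le> (LINT x|lebesgue. indicator (outside n) x * \<bar>f x\<bar>)) sequentially"
    by (intro eventually_sequentiallyI[of N]) (meson less_le_trans of_nat_le_iff)
  with tendsto_integral_outside_cube[OF int] have "\<bar>I\<bar> \<le> 0"
    unfolding outside_def by (intro tendsto_lowerbound) auto
  then show ?thesis
    by (simp add: I_def set_lebesgue_integral_def)
qed

lemma fsigma_imp_borel: "fsigma C \<Longrightarrow> C \<in> sets borel"
proof (induction rule: fsigma.induct)
  case (1 F)
  then show ?case by (intro sets.countable_UN) (auto simp: borel_closed)
qed

lemma set_integral_borel_eq_0: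
  fixes f :: "'a::euclidean_space \<Rightarrow> real"
  assumes int: "integrable lebesgue f" and FT: "fourier_transform f = (\<lambda>_. 0)"
    and A: "A \<in> sets borel"
  shows "(LINT x:A|lebesgue. f x) = 0"
proof -
  let ?boxes = "range (\<lambda>(a, b). box a b :: 'a set)"
  have set_int: "set_integrable lebesgue S f" if "S \<in> sets lebesgue" for S
    unfolding set_integrable_def using integrable_mult_indicator[OF that int] by simp
  have box_borel: "S \<in> sigma_sets UNIV ?boxes \<Longrightarrow> S \<in> sets lebesgue" for S
    by (simp add: borel_eq_box)
  have "Int_stable ?boxes"
    by (auto simp: Int_stable_def box_Int_box)
  moreover have "?boxes \<subseteq> Pow UNIV" by auto
  moreover have "A \<in> sigma_sets UNIV ?boxes"
    using A unfolding borel_eq_box by simp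
  ultimately show ?thesis
  proof (induction rule: sigma_sets_induct_disjoint)
    case (basic A)
    then show ?case
      using set_integral_box_eq_0[OF int FT] by auto
  next
    case empty
    then show ?case by (simp add: set_lebesgue_integral_def)
  next
    case (compl A)
    have "complex_of_real (LINT x|lebesgue. f x) = fourier_transform f 0"
      by (simp add: fourier_transform_def integral_complex_of_real)
    then have "(LINT x:A \<union> (UNIV - A)|lebesgue. f x) = 0"
      using FT by (simp add: set_lebesgue_integral_def)
    moreover have "A \<in> sets lebesgue"
      using compl.hyps by (rule box_borel)
    then have "(LINT x:A \<union> (UNIV - A)|lebesgue. f x)
        = (LINT x:A|lebesgue. f x) + (LINT x:UNIV - A|lebesgue. f x)"
      by (intro set_integral_Un set_int) auto
    ultimately show ?case
      using compl.IH by simp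
  next
    case (union A)
    have "A i \<in> sets lebesgue" for i
      using union.hyps(2) by (auto intro: box_borel)
    moreover have "A i \<inter> A j = {}" if "i \<noteq> j" for i j
      using union.hyps(1) that by (auto simp: disjoint_family_on_def)
    ultimately have "(LINT x:(\<Union>i. A i)|lebesgue. f x) = (\<Sum>i. (LINT x:A i|lebesgue. f x))"
      by (intro lebesgue_integral_countable_add set_int) auto
    then show ?case
      using union.IH by simp
  qed
qed

lemma fourier_transform_eq_0_imp_AE_zero:
  fixes f :: "'a::euclidean_space \<Rightarrow> real"
  assumes int: "integrable lebesgue f" and FT: "fourier_transform f = (\<lambda>_. 0)"
  shows "AE x in lebesgue. f x = 0"
proof -
  have [measurable]: "f \<in> borel_measurable lebesgue"
    using int by (rule borel_measurable_integrable)
  have "(LINT x:S|lebesgue. f x) = 0" if S: "S \<in> sets lebesgue" for S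
  proof -
    obtain C T where C: "fsigma C" and T: "T \<in> null_sets lebesgue" and CT: "C \<union> T = S" "disjnt C T"
      using lebesgue_set_almost_fsigma[OF S] by metis
    have "C \<in> sets lebesgue"
      using fsigma_imp_borel[OF C] by simp
    moreover have "AE x in lebesgue. x \<in> C \<longleftrightarrow> x \<in> S"
      using AE_not_in[OF T] by eventually_elim (use CT in auto)
    ultimately have "(LINT x:S|lebesgue. f x) = (LINT x:C|lebesgue. f x)"
      using S by (intro set_integral_cong_set) (auto simp: set_borel_measurable_def)
    also have "\<dots> = 0"
      using set_integral_borel_eq_0[OF int FT fsigma_imp_borel[OF C]] .
    finally show ?thesis .
  qed
  then have "AE x in lebesgue. f x = (\<lambda>x. 0) x"
    by (intro density_unique_real[OF int integrable_zero]) (simp add: set_lebesgue_integral_def)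
  then show ?thesis by simp
qed

section \<open>Uniqueness of the coefficients\<close>

lemma ess_nonzero_iff_not_AE_zero:
  fixes f :: "'a::euclidean_space \<Rightarrow> real"
  assumes [measurable]: "f \<in> borel_measurable lebesgue"
  shows "ess_nonzero f \<longleftrightarrow> \<not> (AE x in lebesgue. f x = 0)"
proof -
  have "{x \<in> space lebesgue. f x \<noteq> 0} \<in> sets lebesgue"
    by measurable
  then have "{x. f x \<noteq> 0} \<in> sets lebesgue"
    by simp
  then show ?thesis
    unfolding ess_nonzero_def by (subst AE_iff_measurable) (auto simp: zero_less_iff_neq_zero)
qed

lemma even_decaying_tendsto_0:
  fixes g :: "real \<Rightarrow> real"
  assumes even: "\<And>s. g (- s) = g s"
    and decay: "\<exists>s0 c. s0 \<ge> 0 \<and> c > 0 \<and> (\<forall>s. s \<ge> s0 \<and> s > 0 \<longrightarrow> (g s)\<^sup>2 \<le> c / s ^ n)"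
    and n: "n \<ge> 1"
  shows "(g \<longlongrightarrow> 0) at_infinity"
proof -
  obtain s0 c where c: "c > 0" and bound: "\<And>s. s \<ge> s0 \<Longrightarrow> s > 0 \<Longrightarrow> (g s)\<^sup>2 \<le> c / s ^ n"
    using decay by blast
  have "\<bar>g s\<bar> \<le> sqrt (c / norm s)" if s: "norm s \<ge> max s0 1" for s
  proof -
    have "\<bar>g s\<bar>\<^sup>2 = (g \<bar>s\<bar>)\<^sup>2"
      using even[of s] by (cases "s \<ge> 0") auto
    also have "\<dots> \<le> c / \<bar>s\<bar> ^ n"
      using bound[of "\<bar>s\<bar>"] s by auto
    also have "\<dots> \<le> c / \<bar>s\<bar>"
      using c s power_increasing[OF n, of "\<bar>s\<bar>"] by (intro divide_left_mono) auto
    finally have "\<bar>g s\<bar>\<^sup>2 \<le> c / norm s"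
      by simp
    then show ?thesis
      by (simp add: real_le_rsqrt)
  qed
  moreover have "eventually (\<lambda>s. norm s \<ge> max s0 1) (at_infinity :: real filter)"
    using filterlim_norm_at_top unfolding filterlim_at_top by blast
  ultimately have "eventually (\<lambda>s. norm (g s) \<le> sqrt (c / norm s)) at_infinity"
    by (auto elim: eventually_mono)
  moreover have "((\<lambda>u. sqrt (c / u)) \<longlongrightarrow> 0) at_top"
    using c by real_asymp
  then have "((\<lambda>s. sqrt (c / norm s)) \<longlongrightarrow> 0) (at_infinity :: real filter)"
    using filterlim_compose filterlim_norm_at_top by blast
  ultimately show ?thesis
    by (rule Lim_null_comparison)
qed

lemma affine_tendsto_at_infinity:
  fixes d t :: real
  assumes "d \<noteq> 0"
  shows "filterlim (\<lambda>r. r * d + t) at_infinity at_top"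
proof (cases "d > 0")
  case True
  then have "filterlim (\<lambda>r. r * d + t) at_top at_top" by real_asymp
  then show ?thesis using at_top_le_at_infinity by (rule filterlim_mono) simp
next
  case False
  with assms have "d < 0" by simp
  then have "filterlim (\<lambda>r. r * d + t) at_bot at_top" by real_asymp
  then show ?thesis using at_bot_le_at_infinity by (rule filterlim_mono) simp
qed

text \<open>
  Taking \<open>\<rho> = a\<^sub>m + t/r\<close>, the \<open>m\<close>-th argument is the constant \<open>t\<close> while all others
  \<open>r(a\<^sub>m - a\<^sub>j) + t\<close> escape to infinity as \<open>r \<rightarrow> \<infinity>\<close>.
\<close>
lemma shifted_profiles_coeff_eq_0:
  fixes a E :: "nat \<Rightarrow> real" and g :: "nat \<Rightarrow> real \<Rightarrow> real"
  assumes sum0: "\<And>r \<rho>. r > 0 \<Longrightarrow> \<rho> \<ge> 0 \<Longrightarrow> (\<Sum>j\<le>k. E j * g j (r * (\<rho> - a j))) = 0"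
    and a_inj: "inj_on a {..k}" and m: "m \<le> k" "a m \<ge> 0"
    and decay: "\<And>j. j \<le> k \<Longrightarrow> j \<noteq> m \<Longrightarrow> (g j \<longlongrightarrow> 0) at_infinity"
    and t: "t \<ge> 0"
  shows "E m * g m t = 0"
proof -
  define S where "S r = (\<Sum>j\<in>{..k} - {m}. E j * g j (r * (a m - a j) + t))" for r
  have coeff_eq: "E m * g m t = - S r" if r: "r > 0" for r
  proof -
    have "r * ((a m + t / r) - a j) = r * (a m - a j) + t" for j
      using r by (simp add: field_simps)
    then have "(\<Sum>j\<le>k. E j * g j (r * (a m - a j) + t)) = 0"
      using sum0[OF r, of "a m + t / r"] m(2) t r by simp
    then show ?thesis
      using m(1) by (simp add: S_def sum.remove[of "{..k}" m])
  qed
  have "(S \<longlongrightarrow> (\<Sum>j\<in>{..k} - {m}. E j * 0)) at_top"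
    unfolding S_def[abs_def]
  proof (intro tendsto_sum tendsto_mult tendsto_const)
    fix j assume "j \<in> {..k} - {m}"
    then have j: "j \<le> k" "j \<noteq> m" by auto
    then have "a m - a j \<noteq> 0"
      using a_inj m(1) by (auto dest: inj_onD)
    then show "((\<lambda>r. g j (r * (a m - a j) + t)) \<longlongrightarrow> 0) at_top"
      using filterlim_compose[OF decay[OF j] affine_tendsto_at_infinity] by (simp add: o_def)
  qed
  then have "((\<lambda>r. - S r) \<longlongrightarrow> 0) at_top"
    using tendsto_minus by fastforce
  moreover have "eventually (\<lambda>r. - S r = E m * g m t) at_top"
    using eventually_gt_at_top[of "0::real"] by (rule eventually_mono) (simp add: coeff_eq)
  ultimately have "((\<lambda>r. E m * g m t) \<longlongrightarrow> 0) (at_top :: real filter)"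
    by (rule Lim_transform_eventually)
  then show ?thesis
    by (simp add: tendsto_const_iff)
qed

theorem lemma1:
  fixes k :: nat and a :: "nat \<Rightarrow> real"
    and f :: "nat \<Rightarrow> real \<Rightarrow> 'a::euclidean_space \<Rightarrow> real"
    and g :: "nat \<Rightarrow> real \<Rightarrow> real"
    and F :: "real \<Rightarrow> 'a \<Rightarrow> real"
    and C D :: "nat \<Rightarrow> real"
  assumes a0: "a 0 = 0"
    and a_mono: "\<And>i j. i < j \<Longrightarrow> j \<le> k \<Longrightarrow> a i < a j"
    and rad: "\<And>j r. j \<le> k \<Longrightarrow> r > 0 \<Longrightarrow> radial (f j r)"
    and nz: "\<And>j r. j \<le> k \<Longrightarrow> r > 0 \<Longrightarrow> ess_nonzero (f j r)"
    and L1: "\<And>j r. j \<le> k \<Longrightarrow> r > 0 \<Longrightarrow> integrable lebesgue (f j r)"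
    and L2: "\<And>j r. j \<le> k \<Longrightarrow> r > 0 \<Longrightarrow> integrable lebesgue (\<lambda>x. (f j r x)\<^sup>2)"
    and fourier: "\<And>j r lam. j \<le> k \<Longrightarrow> r > 0 \<Longrightarrow>
       complex_of_real (1 / r ^ DIM('a)) *
         (LINT x|lebesgue. cis (lam \<bullet> x) * complex_of_real (f j r x))
       = complex_of_real (g j (r * (norm lam - a j)))"
    and g_even: "\<And>j s. j \<le> k \<Longrightarrow> g j (- s) = g j s"
    and g_decay: "\<And>j. j \<le> k \<Longrightarrow> \<exists>s0 c. s0 \<ge> 0 \<and> c > 0 \<and>
       (\<forall>s. s \<ge> s0 \<and> s > 0 \<longrightarrow> (g j s)\<^sup>2 \<le> c / s ^ DIM('a))"
    and repC: "\<And>r x. r > 0 \<Longrightarrow> F r x = (\<Sum>j\<le>k. C j * f j r x)"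
    and repD: "\<And>r x. r > 0 \<Longrightarrow> F r x = (\<Sum>j\<le>k. D j * f j r x)"
  shows "\<forall>j\<le>k. C j = D j"
proof (rule ccontr)
  assume "\<not> (\<forall>j\<le>k. C j = D j)"
  then obtain m where m: "m \<le> k" "C m \<noteq> D m" by auto
  define E where "E j = C j - D j" for j
  have "inj_on a {..k}"
    by (intro linorder_inj_onI') (fastforce dest: a_mono)
  moreover have "a m \<ge> 0"
    using a0 a_mono[of 0 m] m(1) by (cases "m = 0") auto
  moreover have "(\<Sum>j\<le>k. E j * g j (r * (\<rho> - a j))) = 0" if r: "r > 0" and "\<rho> \<ge> 0" for r \<rho>
  proof -
    obtain e :: 'a where "e \<in> Basis" using nonempty_Basis by blast
    with \<open>\<rho> \<ge> 0\<close> have norm_lam: "norm (\<rho> *\<^sub>R e) = \<rho>" by simp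
    have "(\<Sum>j\<le>k. E j * (r ^ DIM('a) * g j (r * (\<rho> - a j)))) = 0"
    proof (rule sum_fourier_values_eq_0)
      show "integrable lebesgue (f j r)" if "j \<in> {..k}" for j
        using L1 that r by simp
      show "fourier_transform (f j r) (\<rho> *\<^sub>R e) = complex_of_real (r ^ DIM('a) * g j (r * (\<rho> - a j)))"
        if "j \<in> {..k}" for j
        using fourier[of j r "\<rho> *\<^sub>R e"] that r unfolding norm_lam
        by (simp add: fourier_transform_def field_simps)
      show "(\<Sum>j\<le>k. E j * f j r x) = 0" for x
        using repC[OF r] repD[OF r] by (simp add: E_def left_diff_distrib sum_subtractf)
    qed simp
    moreover have "(\<Sum>j\<le>k. E j * (r ^ DIM('a) * g j (r * (\<rho> - a j))))
        = r ^ DIM('a) * (\<Sum>j\<le>k. E j * g j (r * (\<rho> - a j)))"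
      by (simp add: sum_distrib_left mult.left_commute)
    ultimately show ?thesis
      using r by simp
  qed
  moreover have "(g j \<longlongrightarrow> 0) at_infinity" if "j \<le> k" for j
    by (rule even_decaying_tendsto_0[OF g_even[OF that] g_decay[OF that]]) (simp add: Suc_le_eq)
  ultimately have "E m * g m t = 0" if "t \<ge> 0" for t
    using m(1) that by (intro shifted_profiles_coeff_eq_0[where k=k and E=E and g=g and a=a]) auto
  then have "g m t = 0" for t
    using m(2) g_even[OF m(1), of t] by (cases "t \<ge> 0") (auto simp: E_def)
  then have "fourier_transform (f m 1) = (\<lambda>_. 0)"
    using fourier[OF m(1), of 1] by (simp add: fourier_transform_def fun_eq_iff)
  then have "AE x in lebesgue. f m 1 x = 0"
    using L1[OF m(1)] by (intro fourier_transform_eq_0_imp_AE_zero) simp_all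
  moreover have "f m 1 \<in> borel_measurable lebesgue"
    using L1[OF m(1)] by (simp add: borel_measurable_integrable)
  ultimately show False
    using nz[OF m(1), of 1] by (simp add: ess_nonzero_iff_not_AE_zero)
qed

end
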